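(* Let $q$ be a prime power and $b,k,t$ positive integers with $t\ge\lceil\frac{9+b}{2}\rceil$ and $b\le k\le(2t-b+1)^2$. Then \[ r_b^{wt_b}(k,t)\le\frac{q(2t-b)}{q\left(1-\sqrt{\frac{\ln(2t-b+1)}{2t-b+1}}\right)-1}. \]
   Context: For $\boldsymbol{z}=(z_0,\ldots,z_{n-1}),\boldsymbol{w}\in\mathbb{F}_q^n$, $d_b(\boldsymbol{z},\boldsymbol{w})$ is the number of $i\in\{0,\ldots,n-1\}$ with $(z_i,\ldots,z_{i+b-1})\ne(w_i,\ldots,w_{i+b-1})$ (indices mod $n$), and $wt_b(\boldsymbol{x})=d_b(\boldsymbol{x},\boldsymbol{0})$ is the $b$-symbol weight function on $\mathbb{F}_q^k$. A systematic encoding $\mathrm{Enc}(\boldsymbol{x})=(\boldsymbol{x},p(\boldsymbol{x}))\in\mathbb{F}_q^{k+r}$ is a function-correcting $b$-symbol code for $f$ if $d_b(\mathrm{Enc}(\boldsymbol{x}_1),\mathrm{Enc}(\boldsymbol{x}_2))\ge 2t+1$ whenever $f(\boldsymbol{x}_1)\ne f(\boldsymbol{x}_2)$; $r_b^f(k,t)$ is the smallest $r$ for which one exists. *)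

theory Defs
  imports Complex_Main
begin

text \<open>Vectors in F_q^n are lists of length n; indices are taken cyclically mod n.\<close>

definition bsym_dist :: "nat \<Rightarrow> 'a list \<Rightarrow> 'a list \<Rightarrow> nat" where
  "bsym_dist b z w = (let n = length z in
     card {i. i < n \<and> (\<exists>j<b. z ! ((i + j) mod n) \<noteq> w ! ((i + j) mod n))})"

definition bsym_wt :: "nat \<Rightarrow> 'a::zero list \<Rightarrow> nat" where
  "bsym_wt b x = bsym_dist b x (replicate (length x) 0)"

text \<open>Systematic encoding x \<mapsto> (x, p x) with p : F_q^k \<rightarrow> F_q^r is a
  function-correcting b-symbol code for f with parameter t.\<close>

definition is_fc_bsym_code ::
  "nat \<Rightarrow> nat \<Rightarrow> nat \<Rightarrow> nat \<Rightarrow> ('a list \<Rightarrow> 'c) \<Rightarrow> ('a list \<Rightarrow> 'a list) \<Rightarrow> bool" where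
  "is_fc_bsym_code b k t r f p \<longleftrightarrow>
     (\<forall>x. length x = k \<longrightarrow> length (p x) = r) \<and>
     (\<forall>x1 x2. length x1 = k \<longrightarrow> length x2 = k \<longrightarrow> f x1 \<noteq> f x2 \<longrightarrow>
        bsym_dist b (x1 @ p x1) (x2 @ p x2) \<ge> 2 * t + 1)"

definition fc_bsym_redundancy ::
  "'a itself \<Rightarrow> nat \<Rightarrow> ('a list \<Rightarrow> 'c) \<Rightarrow> nat \<Rightarrow> nat \<Rightarrow> nat" where
  "fc_bsym_redundancy _ b f k t = (LEAST r. \<exists>p :: 'a list \<Rightarrow> 'a list. is_fc_bsym_code b k t r f p)"

end

(* Since wt_b takes only the values 0..k, it suffices to encode x by the parity C (wt_b x),
   where C is a code of k + 1 words of length r with pairwise Hamming distance at least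
   N = 2t - b + 1: two messages of different weight then differ in the message part and
   in the parity part, which forces N + b windows of length b to differ.
   Such a code exists by the greedy Gilbert-Varshamov argument as soon as k times the
   volume of a Hamming ball of radius N - 1 is below q^r.  Hoeffding's lemma bounds that
   volume by q^r exp (-2 delta^2 / r) with delta = r (1 - 1/q) - (N - 1), and for r the
   floor of the stated bound one gets delta^2 > r ln N, while k <= N^2. *)

theory Submission
  imports Defs "HOL-Probability.Hoeffding"
begin

definition hamming_dist :: "'a list \<Rightarrow> 'a list \<Rightarrow> nat" where
  "hamming_dist c y = length (filter (\<lambda>(a, b). a \<noteq> b) (zip c y))"

lemma hamming_dist_Nil [simp]: "hamming_dist [] y = 0"
  by (simp add: hamming_dist_def)

lemma hamming_dist_Cons [simp]:
  "hamming_dist (a # c) (b # y) = (if a = b then 0 else 1) + hamming_dist c y"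
  by (simp add: hamming_dist_def)

lemma hamming_dist_self [simp]: "hamming_dist c c = 0"
  by (induction c) simp_all

lemma hamming_dist_commute: "hamming_dist c y = hamming_dist y c"
proof (induction c arbitrary: y)
  case (Cons a c)
  then show ?case by (cases y) (simp_all add: hamming_dist_def)
qed (simp add: hamming_dist_def)

lemma hamming_dist_conv_card:
  "length c = length y \<Longrightarrow> hamming_dist c y = card {i. i < length c \<and> c ! i \<noteq> y ! i}"
  by (auto simp: hamming_dist_def length_filter_conv_card intro!: arg_cong[where f = card])

lemma finite_lists_length_eq_UNIV [simp]: "finite {y :: 'a::finite list. length y = n}"
  using finite_lists_length_eq[of "UNIV :: 'a set" n] by simp

lemma card_lists_length_eq_UNIV: "card {y :: 'a::finite list. length y = n} = CARD('a) ^ n"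
  using card_lists_length_eq[of "UNIV :: 'a set" n] by simp

lemma sum_UNIV_if_eq:
  fixes x :: "'b::comm_semiring_1"
  shows "(\<Sum>z\<in>(UNIV :: 'a::finite set). if a = z then 1 else x) = 1 + of_nat (CARD('a) - 1) * x"
proof -
  have "(\<Sum>z\<in>UNIV. if a = z then 1 else x) = 1 + (\<Sum>z\<in>UNIV - {a}. x)"
    by (subst sum.remove[of _ a]) (auto intro!: sum.cong)
  then show ?thesis by (simp add: card_Diff_singleton)
qed

lemma sum_power_hamming_dist:
  fixes x :: "'b::comm_semiring_1" and c :: "'a::finite list"
  shows "(\<Sum>y | length y = length c. x ^ hamming_dist c y) = (1 + of_nat (CARD('a) - 1) * x) ^ length c"
proof (induction c)
  case Nil
  have "{y :: 'a list. length y = 0} = {[]}" by auto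
  then show ?case by simp
next
  case (Cons a c)
  have words: "{y :: 'a list. length y = Suc (length c)} = (\<lambda>(y, z). z # y) ` ({y. length y = length c} \<times> UNIV)"
    using lists_length_Suc_eq[of UNIV "length c"] by simp
  have "(\<Sum>y | length y = length (a # c). x ^ hamming_dist (a # c) y)
      = (\<Sum>(y, z) \<in> {y. length y = length c} \<times> UNIV. x ^ hamming_dist (a # c) (z # y))"
    unfolding length_Cons words by (subst sum.reindex) (auto simp: inj_on_def case_prod_unfold)
  also have "\<dots> = (\<Sum>(y, z) \<in> {y. length y = length c} \<times> UNIV. x ^ hamming_dist c y * (if a = z then 1 else x))"
    by (intro sum.cong) (auto simp: power_add mult.commute)
  also have "\<dots> = (\<Sum>y | length y = length c. x ^ hamming_dist c y) * (\<Sum>z\<in>UNIV. if a = z then 1 else x)"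
    by (simp add: sum_product sum.cartesian_product)
  finally show ?case by (simp add: Cons sum_UNIV_if_eq mult.commute)
qed

lemma card_hamming_ball_le_exp:
  fixes c :: "'a::finite list" and h :: real
  assumes "0 \<le> h"
  shows "real (card {y. length y = length c \<and> hamming_dist c y < N})
    \<le> exp (h * (real N - 1)) * (1 + real (CARD('a) - 1) * exp (- h)) ^ length c"
proof -
  let ?ball = "{y. length y = length c \<and> hamming_dist c y < N}"
  let ?words = "{y :: 'a list. length y = length c}"
  have "real (card ?ball) = (\<Sum>y\<in>?ball. 1)" by simp
  also have "\<dots> \<le> (\<Sum>y\<in>?ball. exp (h * (real N - 1)) * exp (- h) ^ hamming_dist c y)"
  proof (intro sum_mono)
    fix y assume "y \<in> ?ball"
    then have "0 \<le> h * (real N - 1 - real (hamming_dist c y))"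
      using assms by (intro mult_nonneg_nonneg) auto
    then have "1 \<le> exp (h * (real N - 1) + real (hamming_dist c y) * (- h))"
      by (simp add: algebra_simps)
    then show "1 \<le> exp (h * (real N - 1)) * exp (- h) ^ hamming_dist c y"
      by (simp add: exp_of_nat_mult[symmetric] mult_exp_exp)
  qed
  also have "\<dots> \<le> (\<Sum>y\<in>?words. exp (h * (real N - 1)) * exp (- h) ^ hamming_dist c y)"
    by (intro sum_mono2) auto
  also have "\<dots> = exp (h * (real N - 1)) * (1 + real (CARD('a) - 1) * exp (- h)) ^ length c"
    by (simp add: sum_distrib_left[symmetric] sum_power_hamming_dist)
  finally show ?thesis .
qed

text \<open>The left-hand side divided by \<open>q\<close> is \<open>E[exp (- h X)]\<close> for \<open>X\<close> Bernoulli with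
  mean \<open>1 - 1 / q\<close>, so this is Hoeffding's lemma.\<close>
lemma one_add_exp_minus_le_Hoeffding:
  fixes q h :: real
  assumes "1 \<le> q" "0 \<le> h"
  shows "1 + (q - 1) * exp (- h) \<le> q * exp (h\<^sup>2 / 8 - h * (1 - 1 / q))"
proof -
  define u where "u = 1 / q"
  have u: "0 < u" "u \<le> 1" using assms by (auto simp: u_def)
  have pos: "0 < 1 + u * (exp h - 1)"
    using u assms by (smt (verit) mult_nonneg_nonneg one_le_exp_iff)
  have "ln (1 + u * (exp h - 1)) \<le> h * u + h\<^sup>2 / 8"
    using Hoeffdings_lemma_aux[of h u] assms u by simp
  then have "1 + u * (exp h - 1) \<le> exp (h * u + h\<^sup>2 / 8)"
    using pos by (metis exp_le_cancel_iff exp_ln)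
  then have "q * exp (- h) * (1 + u * (exp h - 1)) \<le> q * exp (- h) * exp (h * u + h\<^sup>2 / 8)"
    using assms by (intro mult_left_mono) auto
  moreover have "q * exp (- h) * (1 + u * (exp h - 1)) = 1 + (q - 1) * exp (- h)"
    using assms by (simp add: u_def field_simps exp_minus)
  moreover have "exp (- h) * exp (h * u + h\<^sup>2 / 8) = exp (h\<^sup>2 / 8 - h * (1 - u))"
    by (simp add: exp_add[symmetric] algebra_simps)
  ultimately show ?thesis by (simp add: u_def mult.assoc)
qed

lemma card_hamming_ball_le_Hoeffding:
  fixes c :: "'a::finite list" and N r :: nat
  assumes "length c = r"
  defines "\<delta> \<equiv> real r * (1 - 1 / CARD('a)) - (real N - 1)"
  assumes "0 < r" "0 \<le> \<delta>"
  shows "real (card {y. length y = r \<and> hamming_dist c y < N}) \<le> CARD('a) ^ r * exp (- 2 * \<delta>\<^sup>2 / r)"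
proof -
  define q where "q = real CARD('a)"
  \<comment> \<open>the minimiser of the exponent \<open>h (N - 1) + r (h\<^sup>2 / 8 - h (1 - 1 / q))\<close>\<close>
  define h where "h = 4 * \<delta> / r"
  have q: "1 \<le> q" by (simp add: q_def Suc_le_eq)
  have h: "0 \<le> h" using assms by (simp add: h_def)
  have "real (card {y. length y = r \<and> hamming_dist c y < N})
      \<le> exp (h * (real N - 1)) * (1 + (q - 1) * exp (- h)) ^ r"
    using card_hamming_ball_le_exp[OF h, of c N] assms(1) by (simp add: q_def of_nat_diff Suc_le_eq)
  also have "\<dots> \<le> exp (h * (real N - 1)) * (q * exp (h\<^sup>2 / 8 - h * (1 - 1 / q))) ^ r"
    using one_add_exp_minus_le_Hoeffding[OF q h] q
    by (intro mult_left_mono power_mono) (auto intro!: add_nonneg_nonneg)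
  also have "\<dots> = q ^ r * exp (h * (real N - 1) + r * (h\<^sup>2 / 8 - h * (1 - 1 / q)))"
    by (simp add: power_mult_distrib exp_add exp_of_nat_mult[symmetric])
  also have "h * (real N - 1) + r * (h\<^sup>2 / 8 - h * (1 - 1 / q)) = - 2 * \<delta>\<^sup>2 / r"
    using assms by (simp add: h_def \<delta>_def q_def field_simps power2_eq_square)
  finally show ?thesis by (simp add: q_def)
qed

lemma greedy_pairwise_far:
  fixes V :: "'a set" and near :: "'a \<Rightarrow> 'a \<Rightarrow> bool" and B :: real and m :: nat
  assumes "finite V" and "0 \<le> B"
    and near_sym: "\<And>x y. near x y \<Longrightarrow> near y x"
    and ball: "\<And>c. c \<in> V \<Longrightarrow> real (card {y \<in> V. near c y}) \<le> B"
    and "real m * B < real (card V)"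
  shows "\<exists>C. (\<forall>v\<le>m. C v \<in> V) \<and> (\<forall>v\<le>m. \<forall>v'\<le>m. v \<noteq> v' \<longrightarrow> \<not> near (C v) (C v'))"
  using assms(5)
proof (induction m)
  case 0
  then have "V \<noteq> {}" by auto
  then obtain y where "y \<in> V" by blast
  then show ?case by (intro exI[of _ "\<lambda>_. y"]) simp
next
  case (Suc m)
  have "real m * B \<le> real (Suc m) * B"
    using \<open>0 \<le> B\<close> by (intro mult_right_mono) auto
  then obtain C where C_in: "\<forall>v\<le>m. C v \<in> V"
    and C_far: "\<forall>v\<le>m. \<forall>v'\<le>m. v \<noteq> v' \<longrightarrow> \<not> near (C v) (C v')"
    using Suc.IH Suc.prems by fastforce
  define U where "U = (\<Union>v\<le>m. {y \<in> V. near (C v) y})"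
  have "real (card U) \<le> (\<Sum>v\<le>m. real (card {y \<in> V. near (C v) y}))"
    unfolding U_def of_nat_sum[symmetric] of_nat_le_iff by (rule card_UN_le) simp
  also have "\<dots> \<le> (\<Sum>v\<le>m. B)"
    using C_in ball by (intro sum_mono) simp
  also have "\<dots> = real (Suc m) * B" by simp
  finally have "card U < card V" using Suc.prems by linarith
  moreover have "U \<subseteq> V" by (auto simp: U_def)
  moreover from this have "finite U" using \<open>finite V\<close> by (rule finite_subset)
  ultimately have "\<not> V \<subseteq> U" by (auto dest: card_mono)
  then obtain y where y: "y \<in> V" "y \<notin> U" by blast
  then have y_far: "\<not> near (C v) y" if "v \<le> m" for v
    using that by (auto simp: U_def)
  show ?case
  proof (intro exI[of _ "C(Suc m := y)"] conjI allI impI)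
    show "(C(Suc m := y)) v \<in> V" if "v \<le> Suc m" for v
      using that C_in y by (auto simp: le_Suc_eq)
    show "\<not> near ((C(Suc m := y)) v) ((C(Suc m := y)) v')"
      if "v \<le> Suc m" "v' \<le> Suc m" "v \<noteq> v'" for v v'
      using that C_far y_far by (auto simp: le_Suc_eq dest: near_sym)
  qed
qed

lemma exists_hamming_code_Hoeffding:
  fixes N r m :: nat
  defines "\<delta> \<equiv> real r * (1 - 1 / CARD('a::finite)) - (real N - 1)"
  assumes "0 < r" "0 \<le> \<delta>" "real m * exp (- 2 * \<delta>\<^sup>2 / r) < 1"
  shows "\<exists>C :: nat \<Rightarrow> 'a list. \<forall>v\<le>m. length (C v) = r \<and>
    (\<forall>v'\<le>m. v \<noteq> v' \<longrightarrow> N \<le> hamming_dist (C v) (C v'))"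
proof -
  define B where "B = CARD('a) ^ r * exp (- 2 * \<delta>\<^sup>2 / r)"
  have small: "real m * B < real (card {y :: 'a list. length y = r})"
    using assms(4) by (simp add: B_def card_lists_length_eq_UNIV)
  have "\<exists>C. (\<forall>v\<le>m. C v \<in> {y :: 'a list. length y = r}) \<and>
      (\<forall>v\<le>m. \<forall>v'\<le>m. v \<noteq> v' \<longrightarrow> \<not> hamming_dist (C v) (C v') < N)"
  proof (rule greedy_pairwise_far[OF _ _ _ _ small])
    show "real (card {y \<in> {y :: 'a list. length y = r}. hamming_dist c y < N}) \<le> B"
      if "c \<in> {y. length y = r}" for c
      using card_hamming_ball_le_Hoeffding[of c r N] that assms(2,3) by (simp add: B_def \<delta>_def)
  qed (auto simp: B_def hamming_dist_commute)
  then show ?thesis by (auto simp: not_less)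
qed

definition bsym_diff_windows :: "nat \<Rightarrow> 'a list \<Rightarrow> 'a list \<Rightarrow> nat set" where
  "bsym_diff_windows b z w =
     {i. i < length z \<and> (\<exists>j<b. z ! ((i + j) mod length z) \<noteq> w ! ((i + j) mod length z))}"

lemma bsym_dist_eq_card: "bsym_dist b z w = card (bsym_diff_windows b z w)"
  by (simp add: bsym_dist_def bsym_diff_windows_def Let_def)

lemma bsym_dist_le_length: "bsym_dist b z w \<le> length z"
proof -
  have "bsym_diff_windows b z w \<subseteq> {..<length z}"
    by (auto simp: bsym_diff_windows_def)
  then show ?thesis
    unfolding bsym_dist_eq_card by (metis card_lessThan card_mono finite_lessThan)
qed

lemma bsym_wt_le_length: "bsym_wt b x \<le> length x"
  by (simp add: bsym_wt_def bsym_dist_le_length)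

lemma in_bsym_diff_windowsI:
  assumes "i \<le> d" "d < i + b" "d < length z" "z ! d \<noteq> w ! d"
  shows "i \<in> bsym_diff_windows b z w"
  unfolding bsym_diff_windows_def
proof (intro CollectI conjI exI[of _ "d - i"])
  show "i < length z" "d - i < b" using assms by auto
  show "z ! ((i + (d - i)) mod length z) \<noteq> w ! ((i + (d - i)) mod length z)"
    using assms by simp
qed

lemma card_insert_Un_atLeastLessThan:
  fixes D :: "nat set"
  assumes "finite D" "D \<subseteq> {m..}" "0 < b" "b \<le> m" "e \<le> m - b"
  shows "card (insert e (D \<union> {m - b + 1..<m})) = card D + b"
proof -
  have "card (D \<union> {m - b + 1..<m}) = card D + (b - 1)"
    using assms(1,2,4) by (subst card_Un_disjoint) auto
  moreover have "e \<notin> D \<union> {m - b + 1..<m}"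
    using assms(2-5) by auto
  ultimately show ?thesis using assms(1,3) by simp
qed

text \<open>Three disjoint families of windows differ: those starting at a parity difference,
  the \<open>b - 1\<close> windows starting shortly before the first parity difference \<open>m\<close> (they contain
  it), and one window starting at or before \<open>m - b\<close> that contains a message difference.\<close>
lemma bsym_dist_append_ge:
  fixes x1 x2 p1 p2 :: "'a list"
  assumes "length x1 = length x2" "length p1 = length p2" "x1 \<noteq> x2" "p1 \<noteq> p2"
    and "0 < b" "b \<le> length x1"
  shows "hamming_dist p1 p2 + b \<le> bsym_dist b (x1 @ p1) (x2 @ p2)"
proof -
  define k where "k = length x1"
  define D where "D = {d. d < length p1 \<and> p1 ! d \<noteq> p2 ! d}"
  define m where "m = k + Min D"
  let ?W = "bsym_diff_windows b (x1 @ p1) (x2 @ p2)"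
  have parity_nth: "(x1 @ p1) ! (k + d) = p1 ! d" "(x2 @ p2) ! (k + d) = p2 ! d" for d
    by (simp add: k_def) (simp add: k_def assms(1))
  have len: "length x1 = k" by (simp add: k_def)
  have "finite D" by (simp add: D_def)
  have "D \<noteq> {}"
  proof
    assume "D = {}"
    then have "p1 = p2" using assms(2) by (intro nth_equalityI) (auto simp: D_def)
    with assms(4) show False ..
  qed
  then have "Min D \<in> D" and Min_le: "\<And>d. d \<in> D \<Longrightarrow> m \<le> k + d"
    using \<open>finite D\<close> by (auto simp: m_def)
  obtain s where s: "s < k" "x1 ! s \<noteq> x2 ! s"
    using assms(1,3) by (metis k_def nth_equalityI)
  have parity: "(+) k ` D \<subseteq> ?W"
  proof (rule image_subsetI)
    fix d assume "d \<in> D"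
    then show "k + d \<in> ?W"
      using assms(5) by (intro in_bsym_diff_windowsI[of _ "k + d"]) (auto simp: D_def len parity_nth)
  qed
  have before: "{m - b + 1..<m} \<subseteq> ?W"
  proof
    fix i assume "i \<in> {m - b + 1..<m}"
    then show "i \<in> ?W"
      using \<open>Min D \<in> D\<close>
      by (intro in_bsym_diff_windowsI[of i m]) (auto simp: D_def m_def len parity_nth)
  qed
  have message: "min s (m - b) \<in> ?W"
    using s assms(1,5,6) by (intro in_bsym_diff_windowsI[of _ s]) (auto simp: m_def k_def nth_append)
  have "b \<le> m" using assms(6) by (simp add: m_def k_def)
  have "(+) k ` D \<subseteq> {m..}" using Min_le by auto
  then have "hamming_dist p1 p2 + b = card (insert (min s (m - b)) ((+) k ` D \<union> {m - b + 1..<m}))"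
    using card_insert_Un_atLeastLessThan[of "(+) k ` D" m b "min s (m - b)"] \<open>finite D\<close> \<open>b \<le> m\<close>
      assms(2,5) by (simp add: hamming_dist_conv_card D_def card_image)
  also have "\<dots> \<le> card ?W"
    using parity before message by (intro card_mono) (auto simp: bsym_diff_windows_def)
  finally show ?thesis
    unfolding bsym_dist_eq_card .
qed

lemma fc_bsym_redundancy_wt_le:
  fixes C :: "nat \<Rightarrow> 'a::zero list"
  assumes "0 < b" "b \<le> k" "b \<le> 2 * t"
    and C: "\<forall>v\<le>k. length (C v) = r \<and> (\<forall>v'\<le>k. v \<noteq> v' \<longrightarrow> 2 * t - b + 1 \<le> hamming_dist (C v) (C v'))"
  shows "fc_bsym_redundancy TYPE('a) b (bsym_wt b :: 'a list \<Rightarrow> nat) k t \<le> r"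
proof -
  define p where "p x = C (bsym_wt b x)" for x :: "'a list"
  have "is_fc_bsym_code b k t r (bsym_wt b) p"
    unfolding is_fc_bsym_code_def
  proof (intro conjI allI impI)
    fix x :: "'a list" assume "length x = k"
    then show "length (p x) = r" using C bsym_wt_le_length[of b x] by (simp add: p_def)
  next
    fix x1 x2 :: "'a list"
    assume len: "length x1 = k" "length x2 = k" and wt: "bsym_wt b x1 \<noteq> bsym_wt b x2"
    then have "2 * t - b + 1 \<le> hamming_dist (p x1) (p x2)" "length (p x1) = r" "length (p x2) = r"
      using C bsym_wt_le_length[of b x1] bsym_wt_le_length[of b x2] by (auto simp: p_def)
    moreover from this have "p x1 \<noteq> p x2" by auto
    moreover have "x1 \<noteq> x2" using wt by auto
    ultimately show "2 * t + 1 \<le> bsym_dist b (x1 @ p x1) (x2 @ p x2)"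
      using bsym_dist_append_ge[of x1 x2 "p x1" "p x2" b] len assms(1-3) by simp
  qed
  then show ?thesis
    unfolding fc_bsym_redundancy_def by (intro Least_le) blast
qed

lemma two_le_card_field: "2 \<le> CARD('a::{finite,field})"
  using card_mono[of UNIV "{0 :: 'a, 1}"] by simp

lemma ln_10_bounds: "2 < ln (10::real)" "ln (10::real) < 5 / 2"
proof -
  have "exp (2::real) = exp 1 ^ 2" by (simp add: exp_of_nat_mult[symmetric])
  also have "\<dots> \<le> 3 ^ 2" using exp_le by (intro power_mono) auto
  finally have "exp 2 < (10::real)" by simp
  then show "2 < ln (10::real)" by (metis exp_less_cancel_iff exp_ln zero_less_numeral)
  have "(11 / 10 :: real) ^ 25 \<le> exp (1 / 10) ^ 25"
    using exp_ge_add_one_self[of "1 / 10 :: real"] by (intro power_mono) auto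
  also have "\<dots> = exp (5 / 2)" by (simp add: exp_of_nat_mult[symmetric])
  finally have "10 < exp (5 / 2 :: real)" by (simp add: power_numeral_reduce)
  then show "ln (10::real) < 5 / 2" by (metis exp_less_cancel_iff exp_ln zero_less_numeral)
qed

lemma two_less_ln: "10 \<le> x \<Longrightarrow> 2 < ln (x::real)"
  using ln_10_bounds(1) by (smt (verit) ln_le_cancel_iff)

lemma ln_div_less_quarter:
  fixes x :: real assumes "10 \<le> x"
  shows "ln x / x < 1 / 4"
proof -
  have "ln (x / 10) \<le> x / 10 - 1" using assms by (intro ln_le_minus_one) auto
  moreover have "ln (x / 10) = ln x - ln 10" using assms by (simp add: ln_div)
  ultimately have "ln x < x / 4" using ln_10_bounds(2) assms by linarith
  then show ?thesis using assms by (simp add: divide_simps)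
qed

lemma two_less_eps_times_excess:
  fixes N u \<epsilon> :: real
  assumes "1 \<le> N" "0 \<le> u" "0 < \<epsilon>" "u + \<epsilon> < 1" "2 < N * \<epsilon>\<^sup>2"
  shows "2 < \<epsilon> * ((N - 1) / (1 - u - \<epsilon>) - N)"
proof -
  define R where "R = (N - 1) / (1 - u - \<epsilon>)"
  have "0 \<le> R" using assms by (simp add: R_def)
  have "N - 1 = R * (1 - u - \<epsilon>)" using assms(4) by (simp add: R_def)
  also have "\<dots> \<le> R * (1 - \<epsilon>)" using \<open>0 \<le> R\<close> assms(2) by (intro mult_left_mono) auto
  finally have "\<epsilon> * (N * \<epsilon> - 1) \<le> \<epsilon> * ((R - N) * (1 - \<epsilon>))"
    using assms(3) by (intro mult_left_mono) (auto simp: algebra_simps)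
  then have "2 * (1 - \<epsilon>) < \<epsilon> * (R - N) * (1 - \<epsilon>)"
    using assms(3,5) by (simp add: power2_eq_square algebra_simps)
  moreover have "0 < 1 - \<epsilon>" using assms(2,4) by linarith
  ultimately show ?thesis
    unfolding R_def[symmetric] using mult_less_cancel_right_pos by blast
qed

lemma floor_redundancy_surplus_bounds:
  fixes N u \<epsilon> :: real
  assumes "1 \<le> N" "0 \<le> u" "0 < \<epsilon>" "u + \<epsilon> < 1" "2 < N * \<epsilon>\<^sup>2"
  defines "r \<equiv> nat \<lfloor>(N - 1) / (1 - u - \<epsilon>)\<rfloor>"
  defines "\<delta> \<equiv> real r * (1 - u) - (N - 1)"
  shows "0 < r" "0 \<le> \<delta>" "real r * (N * \<epsilon>\<^sup>2) < \<delta>\<^sup>2"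
proof -
  define R where "R = (N - 1) / (1 - u - \<epsilon>)"
  have gap: "2 < \<epsilon> * (R - N)" using two_less_eps_times_excess[OF assms(1-5)] by (simp add: R_def)
  have "N < R"
  proof (rule ccontr)
    assume "\<not> N < R"
    then have "\<epsilon> * (R - N) \<le> 0" using assms(3) by (intro mult_nonneg_nonpos) auto
    with gap show False by linarith
  qed
  have r: "real r \<le> R" "R - 1 < real r" using \<open>N < R\<close> assms(1) by (simp_all add: r_def R_def)
  then show "0 < r" using \<open>N < R\<close> assms(1) by linarith
  have "R * (1 - u) = N - 1 + R * \<epsilon>" using assms(4) by (simp add: R_def field_simps)
  then have "\<delta> = R * \<epsilon> - (R - real r) * (1 - u)" by (simp add: \<delta>_def algebra_simps)
  moreover have "(R - real r) * (1 - u) \<le> 1" using r assms(2-4) by (intro mult_le_one) auto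
  ultimately have "R * \<epsilon> - 1 \<le> \<delta>" by linarith
  moreover have "2 < R * \<epsilon>"
  proof -
    have "R * \<epsilon> = \<epsilon> * (R - N) + \<epsilon> * N" by (simp add: algebra_simps)
    moreover have "0 < \<epsilon> * N" using assms(1,3) by simp
    ultimately show ?thesis using gap by linarith
  qed
  ultimately show "0 \<le> \<delta>" by linarith
  have "real r * (N * \<epsilon>\<^sup>2) \<le> R * (N * \<epsilon>\<^sup>2)" using r assms(1) by (intro mult_right_mono) auto
  also have "\<dots> < (R * \<epsilon> - 1)\<^sup>2"
  proof -
    have "(R * \<epsilon> - 1)\<^sup>2 - R * (N * \<epsilon>\<^sup>2) = R * \<epsilon> * (\<epsilon> * (R - N) - 2) + 1"
      by (simp add: power2_eq_square algebra_simps)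
    moreover have "0 \<le> R * \<epsilon> * (\<epsilon> * (R - N) - 2)"
      using gap \<open>2 < R * \<epsilon>\<close> \<open>N < R\<close> assms(1,3) by (intro mult_nonneg_nonneg) auto
    ultimately show ?thesis by linarith
  qed
  also have "\<dots> \<le> \<delta>\<^sup>2" using \<open>R * \<epsilon> - 1 \<le> \<delta>\<close> \<open>2 < R * \<epsilon>\<close> by (intro power_mono) auto
  finally show "real r * (N * \<epsilon>\<^sup>2) < \<delta>\<^sup>2" .
qed

lemma exists_redundancy_below_bound:
  fixes N q :: real and k :: nat
  assumes "10 \<le> N" "2 \<le> q" "real k \<le> N\<^sup>2"
  shows "\<exists>r>0. real r \<le> q * (N - 1) / (q * (1 - sqrt (ln N / N)) - 1) \<and>
    0 \<le> real r * (1 - 1 / q) - (N - 1) \<and>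
    real k * exp (- 2 * (real r * (1 - 1 / q) - (N - 1))\<^sup>2 / r) < 1"
proof -
  define \<epsilon> where "\<epsilon> = sqrt (ln N / N)"
  define u where "u = 1 / q"
  define r where "r = nat \<lfloor>(N - 1) / (1 - u - \<epsilon>)\<rfloor>"
  define \<delta> where "\<delta> = real r * (1 - u) - (N - 1)"
  have "2 < ln N" using two_less_ln assms(1) .
  have N_\<epsilon>: "N * \<epsilon>\<^sup>2 = ln N" using \<open>2 < ln N\<close> assms(1) by (simp add: \<epsilon>_def)
  have "0 < \<epsilon>" using \<open>2 < ln N\<close> assms(1) by (simp add: \<epsilon>_def)
  have "\<epsilon>\<^sup>2 < (1 / 2)\<^sup>2"
    using ln_div_less_quarter[OF assms(1)] \<open>2 < ln N\<close> assms(1) by (simp add: \<epsilon>_def power2_eq_square)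
  then have "\<epsilon> < 1 / 2" by (rule power_less_imp_less_base) simp
  moreover have "0 < u" "u \<le> 1 / 2" using assms(2) by (auto simp: u_def)
  ultimately have "0 < r" "0 \<le> \<delta>" "real r * ln N < \<delta>\<^sup>2"
    using floor_redundancy_surplus_bounds[of N u \<epsilon>] assms(1) \<open>0 < \<epsilon>\<close> \<open>2 < ln N\<close>
    by (simp_all add: r_def \<delta>_def N_\<epsilon>)
  have "real k * exp (- 2 * \<delta>\<^sup>2 / r) \<le> exp (ln N) ^ 2 * exp (- 2 * \<delta>\<^sup>2 / r)"
    using assms(1,3) by (intro mult_right_mono) auto
  also have "\<dots> = exp (2 * (ln N - \<delta>\<^sup>2 / r))"
    by (simp add: exp_of_nat_mult[symmetric] mult_exp_exp algebra_simps)
  also have "\<dots> < 1"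
    using \<open>real r * ln N < \<delta>\<^sup>2\<close> \<open>0 < r\<close> by (simp add: field_simps)
  finally have "real k * exp (- 2 * \<delta>\<^sup>2 / r) < 1" .
  moreover have "real r \<le> (N - 1) / (1 - u - \<epsilon>)"
    using \<open>0 < r\<close> by (simp add: r_def)
  moreover have "(N - 1) / (1 - u - \<epsilon>) = q * (N - 1) / (q * (1 - \<epsilon>) - 1)"
    using assms(2) by (simp add: u_def field_simps)
  ultimately show ?thesis
    using \<open>0 < r\<close> \<open>0 \<le> \<delta>\<close> by (auto simp: \<delta>_def u_def \<epsilon>_def)
qed

theorem mainTheorem18:
  fixes b k t q :: nat
  assumes "q = card (UNIV :: 'a set)"
    and "0 < b" and "0 < k" and "0 < t"
    and "real t \<ge> of_int \<lceil>(9 + real b) / 2\<rceil>"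
    and "b \<le> k" and "k \<le> (2 * t - b + 1) ^ 2"
  shows "real (fc_bsym_redundancy TYPE('a::{finite,field}) b (bsym_wt b :: 'a list \<Rightarrow> nat) k t)
    \<le> real q * (2 * real t - real b) /
      (real q * (1 - sqrt (ln (2 * real t - real b + 1) / (2 * real t - real b + 1))) - 1)"
proof -
  have "(9 + real b) / 2 \<le> real t"
    using le_of_int_ceiling[of "(9 + real b) / 2"] assms(5) by linarith
  then have "real (9 + b) \<le> real (2 * t)" by simp
  then have "9 + b \<le> 2 * t" by (simp only: of_nat_le_iff)
  define N where "N = 2 * t - b + 1"
  have N_real: "real N = 2 * real t - real b + 1"
    using \<open>9 + b \<le> 2 * t\<close> by (simp add: N_def of_nat_diff)
  then have "10 \<le> real N" using \<open>real (9 + b) \<le> real (2 * t)\<close> by simp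
  have "real k \<le> (real N)\<^sup>2"
    using assms(7) unfolding N_def by (metis of_nat_le_iff of_nat_power)
  have "2 \<le> real CARD('a)" using two_le_card_field by simp
  from exists_redundancy_below_bound[OF \<open>10 \<le> real N\<close> this \<open>real k \<le> (real N)\<^sup>2\<close>] obtain r where "0 < r"
    and r_le: "real r \<le> real CARD('a) * (real N - 1) / (real CARD('a) * (1 - sqrt (ln N / N)) - 1)"
    and "0 \<le> real r * (1 - 1 / CARD('a)) - (real N - 1)"
    and "real k * exp (- 2 * (real r * (1 - 1 / CARD('a)) - (real N - 1))\<^sup>2 / r) < 1"
    by blast
  from exists_hamming_code_Hoeffding[OF this(1,3,4)] obtain C :: "nat \<Rightarrow> 'a list"
    where "\<forall>v\<le>k. length (C v) = r \<and> (\<forall>v'\<le>k. v \<noteq> v' \<longrightarrow> N \<le> hamming_dist (C v) (C v'))"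
    by blast
  then have "fc_bsym_redundancy TYPE('a) b (bsym_wt b :: 'a list \<Rightarrow> nat) k t \<le> r"
    using \<open>9 + b \<le> 2 * t\<close> assms(2,6) unfolding N_def by (intro fc_bsym_redundancy_wt_le) auto
  with r_le show ?thesis by (simp add: N_real assms(1))
qed

end
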